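(* Let $s\ge 2$ and $t\ge 0$ be integers, and let $S=\{1+j(2t+4),\ 2t+3+j(2t+4) : 0\le j\le 2^{s-2}-1\}$, i.e. $S=\{1,\,2t+3,\,2t+5,\,4t+7,\dots,\,1+(2^{s-2}-1)(2t+4),\,2t+3+(2^{s-2}-1)(2t+4)\}$. Then $\chi_{la}(C_{2^s(t+2)}(S))=3$, where $C_{2^s(t+2)}(S)$ is the circulant graph with connection set $S$.
   Context: For an integer $n\ge 3$ and a set $S$ of integers, the circulant graph $C_n(S)$ has vertex set $\mathbb Z_n$, with distinct $u,v$ adjacent iff $u-v\equiv \pm a\pmod n$ for some $a\in S$. For a connected graph $G=(V,E)$ with $q=|E|$, a local antimagic labeling is a bijection $f:E\to\{1,\dots,q\}$ such that adjacent vertices $x,y$ satisfy $f^+(x)\ne f^+(y)$, where $f^+(x)=\sum f(e)$ over edges $e$ incident to $x$; $\chi_{la}(G)$ is the minimum number of distinct values of $f^+$ over all local antimagic labelings of $G$. *)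

theory Defs
  imports Main
begin

definition circ_vertices :: "nat \<Rightarrow> int set" where
  "circ_vertices n = {0..<int n}"

definition circ_edges :: "nat \<Rightarrow> int set \<Rightarrow> int set set" where
  "circ_edges n S = {{u, v} | u v. u \<in> circ_vertices n \<and> v \<in> circ_vertices n \<and> u \<noteq> v \<and>
      (\<exists>a\<in>S. (u - v) mod int n = a mod int n \<or> (u - v) mod int n = (- a) mod int n)}"

definition vsum :: "'a set set \<Rightarrow> ('a set \<Rightarrow> nat) \<Rightarrow> 'a \<Rightarrow> nat" where
  "vsum E f x = (\<Sum>e\<in>{e\<in>E. x \<in> e}. f e)"

definition local_antimagic :: "'a set \<Rightarrow> 'a set set \<Rightarrow> ('a set \<Rightarrow> nat) \<Rightarrow> bool" where
  "local_antimagic V E f \<longleftrightarrow> bij_betw f E {1..card E} \<and>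
     (\<forall>x\<in>V. \<forall>y\<in>V. {x, y} \<in> E \<longrightarrow> x \<noteq> y \<longrightarrow> vsum E f x \<noteq> vsum E f y)"

definition chi_la :: "'a set \<Rightarrow> 'a set set \<Rightarrow> nat" where
  "chi_la V E = (LEAST k. \<exists>f. local_antimagic V E f \<and> card (vsum E f ` V) = k)"

end

theory Submission
  imports Defs
begin

(* Write n = 2 K m and N = 2 K, and regard the vertex r + m i (0 \<le> r < m, 0 \<le> i < N) as
  vertex i of layer r.  Up to sign modulo n, S consists of all residues congruent to \<plusminus>1 mod m,
  so C_n(S) joins every vertex of layer r to every vertex of layer r + 1 (mod m): it is a
  2N-regular blow-up of the cycle C_m.

  In a regular graph two vertex sums a \<noteq> b are impossible: both colour classes meet every edge
  exactly once, so counting edges shows that they have the same size, and summing labels then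
  gives a = b.

  The N^2 edges between layers r and r + 1 receive a block
  of consecutive labels; even layers take the blocks 0, 1, 2, ... and odd layers the blocks
  m - 1, m - 2, ..., so the ranks of two consecutive layers sum to m - 1 or m (m/2 at the
  wrap-around).  Inside a block the edges are numbered lexicographically for even r and in
  reverse transposed order for odd r, so the labels of the edges (r, i, k) and (r - 1, k, i) at
  vertex i of layer r sum to N^2 + 1 plus N^2 times the rank sum.  Hence the vertex sum only
  depends on whether the vertex is odd, a multiple of m, or neither. *)

section \<open>Two vertex sums are impossible in a regular graph\<close>

lemma chi_la_eqI:
  assumes "local_antimagic V E f" "card (vsum E f ` V) = k"
    and "\<And>g. local_antimagic V E g \<Longrightarrow> k \<le> card (vsum E g ` V)"
  shows "chi_la V E = k"
  unfolding chi_la_def by (rule Least_equality) (use assms in blast)+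

lemma sum_vsum_transversal:
  assumes "finite X" "finite E" "\<And>e. e \<in> E \<Longrightarrow> card (X \<inter> e) = 1"
  shows "(\<Sum>x\<in>X. vsum E g x) = sum g E"
proof -
  have "(\<Sum>x\<in>X. vsum E g x) = (\<Sum>e\<in>E. \<Sum>x\<in>{x\<in>X. x \<in> e}. g e)"
    unfolding vsum_def by (rule sum.swap_restrict) (use assms in auto)
  also have "\<dots> = sum g E"
    using assms(3) by (intro sum.cong) (simp_all add: Int_def)
  finally show ?thesis .
qed

lemma regular_local_antimagic_card_ge_3:
  assumes "finite V" "finite E" "E \<noteq> {}"
    and edges: "\<And>e. e \<in> E \<Longrightarrow> \<exists>u v. e = {u, v} \<and> u \<in> V \<and> v \<in> V \<and> u \<noteq> v"
    and regular: "\<And>x. x \<in> V \<Longrightarrow> card {e\<in>E. x \<in> e} = d"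
    and f: "local_antimagic V E f"
  shows "3 \<le> card (vsum E f ` V)"
proof (rule ccontr)
  let ?h = "vsum E f"
  have proper: "?h u \<noteq> ?h v" if "{u, v} \<in> E" "u \<in> V" "v \<in> V" "u \<noteq> v" for u v
    using f that unfolding local_antimagic_def by blast
  obtain u0 v0 where uv0: "{u0, v0} \<in> E" "u0 \<in> V" "v0 \<in> V" "u0 \<noteq> v0"
    using \<open>E \<noteq> {}\<close> edges by blast
  assume "\<not> 3 \<le> card (?h ` V)"
  moreover have "card {?h u0, ?h v0} \<le> card (?h ` V)"
    using uv0 \<open>finite V\<close> by (intro card_mono) auto
  ultimately have "card (?h ` V) = 2"
    using proper[OF uv0] by simp
  then obtain a b where ab: "?h ` V = {a, b}" "a \<noteq> b"
    by (auto simp: card_2_iff)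
  have class_transversal: "card ({x\<in>V. ?h x = c} \<inter> e) = 1" if "c \<in> {a, b}" "e \<in> E" for c e
  proof -
    obtain u v where e: "e = {u, v}" "u \<in> V" "v \<in> V" "u \<noteq> v"
      using edges \<open>e \<in> E\<close> by blast
    have "?h u \<in> {a, b}" "?h v \<in> {a, b}" "?h u \<noteq> ?h v"
      using ab e proper \<open>e \<in> E\<close> by blast+
    then have "{x\<in>V. ?h x = c} \<inter> e = {u} \<or> {x\<in>V. ?h x = c} \<inter> e = {v}"
      using e \<open>c \<in> {a, b}\<close> by auto
    then show ?thesis
      by auto
  qed
  have class_count: "card {x\<in>V. ?h x = c} * d = card E" "card {x\<in>V. ?h x = c} * c = sum f E"
    if "c \<in> {a, b}" for c
  proof -
    have "finite {x\<in>V. ?h x = c}"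
      using \<open>finite V\<close> by simp
    note double_count = sum_vsum_transversal[OF this \<open>finite E\<close> class_transversal[OF that]]
    have "(\<Sum>x\<in>{x\<in>V. ?h x = c}. vsum E (\<lambda>_. 1) x) = card {x\<in>V. ?h x = c} * d"
      using regular by (simp add: vsum_def)
    then show "card {x\<in>V. ?h x = c} * d = card E"
      using double_count[of "\<lambda>_. 1"] by simp
    show "card {x\<in>V. ?h x = c} * c = sum f E"
      using double_count[of f] by simp
  qed
  note a_class = class_count[OF insertI1] and b_class = class_count[OF insertI2[OF insertI1]]
  have "card {x\<in>V. ?h x = a} * d \<noteq> 0"
    using a_class(1) \<open>E \<noteq> {}\<close> \<open>finite E\<close> by simp
  then have "d \<noteq> 0" "card {x\<in>V. ?h x = a} \<noteq> 0"
    by simp_all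
  then have "card {x\<in>V. ?h x = a} = card {x\<in>V. ?h x = b}"
    using a_class(1) b_class(1) by (metis mult_right_cancel)
  then show False
    using a_class(2) b_class(2) \<open>a \<noteq> b\<close> \<open>card {x\<in>V. ?h x = a} \<noteq> 0\<close> by (metis mult_left_cancel)
qed

section \<open>The connection set\<close>

definition circ_step :: "nat \<Rightarrow> int set \<Rightarrow> int \<Rightarrow> bool" where
  "circ_step n S d \<longleftrightarrow> (\<exists>a\<in>S. d mod int n = a mod int n \<or> d mod int n = (- a) mod int n)"

lemma circ_edges_circ_step:
  "circ_edges n S =
    {{u, v} | u v. u \<in> circ_vertices n \<and> v \<in> circ_vertices n \<and> u \<noteq> v \<and> circ_step n S (u - v)}"
  unfolding circ_edges_def circ_step_def ..

lemma circ_step_uminus: "circ_step n S (- d) \<longleftrightarrow> circ_step n S d"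
  unfolding circ_step_def by (metis mod_minus_cong minus_minus)

(* The set S of the theorem is conn_set (2 t + 4) (2 ^ (s - 2)). *)
definition conn_set :: "nat \<Rightarrow> nat \<Rightarrow> int set" where
  "conn_set m K = {1 + int j * int m | j. j < K} \<union> {int m - 1 + int j * int m | j. j < K}"

lemma conn_set_mod:
  assumes "a \<in> conn_set m K"
  shows "a mod int m = 1 mod int m \<or> (- a) mod int m = 1 mod int m"
proof -
  obtain j where "a = 1 + int j * int m \<or> a = int m - 1 + int j * int m"
    using assms unfolding conn_set_def by blast
  then show ?thesis
  proof
    assume "a = 1 + int j * int m"
    then show ?thesis
      by simp
  next
    assume "a = int m - 1 + int j * int m"
    then have "- a = 1 + (- 1 - int j) * int m"
      by (simp add: algebra_simps)
    then have "(- a) mod int m = 1 mod int m"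
      by (simp only: mod_mult_self1)
    then show ?thesis ..
  qed
qed

lemma circ_step_conn_setI:
  assumes "0 < m" "0 < K" "d mod int m = 1"
  shows "circ_step (2 * K * m) (conn_set m K) d"
proof -
  define n where "n = int (2 * K * m)"
  define w where "w = d mod n"
  define j where "j = w div int m"
  have "int m dvd n"
    unfolding n_def by simp
  then have "w mod int m = 1"
    using assms(3) unfolding w_def by (simp add: mod_mod_cancel)
  then have w: "w = 1 + j * int m"
    unfolding j_def by (metis add.commute mult_div_mod_eq mult.commute)
  have "0 < n"
    unfolding n_def using assms(1,2) by simp
  then have "0 \<le> w" "w < n"
    unfolding w_def by simp_all
  have "0 \<le> j"
    using \<open>0 \<le> w\<close> assms(1) unfolding j_def by (simp add: pos_imp_zdiv_nonneg_iff)
  have "j * int m < 2 * int K * int m"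
    using \<open>w < n\<close> unfolding w n_def by simp
  then have "j < 2 * int K"
    by (rule mult_right_less_imp_less) simp
  show ?thesis
  proof (cases "j < int K")
    case True
    then have "w \<in> conn_set m K"
      unfolding conn_set_def w using \<open>0 \<le> j\<close> by (auto intro!: exI[of _ "nat j"])
    then show ?thesis
      unfolding circ_step_def w_def n_def by (metis mod_mod_trivial)
  next
    case False
    define a where "a = n - w"
    have "a = int m - 1 + (2 * int K - 1 - j) * int m"
      unfolding a_def n_def w by (simp add: algebra_simps)
    then have "a \<in> conn_set m K"
      unfolding conn_set_def using False \<open>j < 2 * int K\<close>
      by (auto intro!: exI[of _ "nat (2 * int K - 1 - j)"])
    moreover have "w = (- a) mod n"
      unfolding a_def using \<open>0 \<le> w\<close> \<open>w < n\<close> by simp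
    ultimately show ?thesis
      unfolding circ_step_def w_def n_def by blast
  qed
qed

lemma circ_step_conn_set_iff:
  assumes "2 \<le> m" "0 < K"
  shows "circ_step (2 * K * m) (conn_set m K) d \<longleftrightarrow> d mod int m = 1 \<or> (- d) mod int m = 1"
proof
  assume "circ_step (2 * K * m) (conn_set m K) d"
  then obtain a where a: "a \<in> conn_set m K" and
    "d mod int (2 * K * m) = a mod int (2 * K * m) \<or> d mod int (2 * K * m) = (- a) mod int (2 * K * m)"
    unfolding circ_step_def by blast
  moreover have "x mod int m = y mod int m" if "x mod int (2 * K * m) = y mod int (2 * K * m)" for x y
    using mod_mod_cancel[of "int m" "int (2 * K * m)"] that by (metis dvd_triv_right of_nat_mult)
  ultimately have "d mod int m = a mod int m \<or> d mod int m = (- a) mod int m"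
    by blast
  moreover have "(- d) mod int m = (- a) mod int m" if "d mod int m = a mod int m"
    using mod_minus_cong[OF that] .
  moreover have "(- d) mod int m = a mod int m" if "d mod int m = (- a) mod int m"
    using mod_minus_cong[OF that] by simp
  ultimately show "d mod int m = 1 \<or> (- d) mod int m = 1"
    using conn_set_mod[OF a] assms(1) by fastforce
next
  assume "d mod int m = 1 \<or> (- d) mod int m = 1"
  then show "circ_step (2 * K * m) (conn_set m K) d"
    using circ_step_conn_setI[of m K] circ_step_uminus assms by fastforce
qed

section \<open>The circulant as a blown-up cycle\<close>

lemma two_digit_eq_iff:
  fixes a b q :: nat
  assumes "a < q" "b < q"
  shows "a + q * c = b + q * d \<longleftrightarrow> a = b \<and> c = d"
  by (metis assms add.commute mod_mult_self2 mod_less div_mult_self2 div_less add_0 less_nat_zero_code)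

lemma succ_mod_eq_iff:
  fixes r r' m :: nat
  assumes "r < m" "r' < m"
  shows "r = (r' + 1) mod m \<longleftrightarrow> r' = (r + m - 1) mod m"
  using assms by (cases r) (auto simp: mod_Suc)

definition layer_edge :: "nat \<Rightarrow> nat \<times> nat \<times> nat \<Rightarrow> int set" where
  "layer_edge m = (\<lambda>(r, i, k). {int r + int m * int i, int ((r + 1) mod m) + int m * int k})"

definition edge_index :: "nat \<Rightarrow> nat \<Rightarrow> (nat \<times> nat \<times> nat) set" where
  "edge_index m N = {..<m} \<times> {..<N} \<times> {..<N}"

lemma layer_coords_eq_iff:
  fixes r r' m :: nat
  assumes "r < m" "r' < m"
  shows "int r + int m * int i = int r' + int m * int i' \<longleftrightarrow> r = r' \<and> i = i'"
proof -
  have "int r + int m * int i = int r' + int m * int i' \<longleftrightarrow> r + m * i = r' + m * i'"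
    by (metis of_nat_add of_nat_mult of_nat_eq_iff)
  then show ?thesis
    using two_digit_eq_iff[OF assms] by simp
qed

lemma layer_vertex_less:
  fixes r i m N :: nat
  assumes "r < m" "i < N"
  shows "int r + int m * int i < int N * int m"
proof -
  have "int r + int m * int i < int m * (int i + 1)"
    using assms(1) by (simp add: algebra_simps)
  also have "\<dots> \<le> int m * int N"
    using assms(2) by (intro mult_left_mono) simp_all
  finally show ?thesis
    by (simp add: mult.commute)
qed

lemma layer_vertexE:
  assumes "x \<in> {0..<int N * int m}"
  obtains r i where "r < m" "i < N" "x = int r + int m * int i"
proof
  have "nat x < N * m"
    using assms by (simp add: nat_less_iff)
  then show "nat x div m < N" "nat x mod m < m"
    by (simp_all add: less_mult_imp_div_less) (cases "m = 0"; simp)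
  have "x = int (nat x)"
    using assms by simp
  also have "\<dots> = int (nat x mod m + m * (nat x div m))"
    by simp
  finally show "x = int (nat x mod m) + int m * int (nat x div m)"
    by (simp only: of_nat_add of_nat_mult)
qed

lemma inj_on_layer_edge:
  assumes "3 \<le> m"
  shows "inj_on (layer_edge m) (edge_index m N)"
proof (rule inj_onI)
  fix x y
  assume "x \<in> edge_index m N" "y \<in> edge_index m N" and eq: "layer_edge m x = layer_edge m y"
  then obtain r i k r' i' k' where x: "x = (r, i, k)" "r < m" and y: "y = (r', i', k')" "r' < m"
    unfolding edge_index_def by auto
  have succ_less: "(r + 1) mod m < m" "(r' + 1) mod m < m"
    using assms by simp_all
  from eq have
    "int r + int m * int i = int r' + int m * int i' \<and>
       int ((r + 1) mod m) + int m * int k = int ((r' + 1) mod m) + int m * int k' \<or>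
     int r + int m * int i = int ((r' + 1) mod m) + int m * int k' \<and>
       int ((r + 1) mod m) + int m * int k = int r' + int m * int i'"
    unfolding x y layer_edge_def by (simp add: doubleton_eq_iff)
  then show "x = y"
  proof
    assume "int r + int m * int i = int r' + int m * int i' \<and>
       int ((r + 1) mod m) + int m * int k = int ((r' + 1) mod m) + int m * int k'"
    then show ?thesis
      using x y succ_less by (simp add: layer_coords_eq_iff)
  next
    assume crossed: "int r + int m * int i = int ((r' + 1) mod m) + int m * int k' \<and>
       int ((r + 1) mod m) + int m * int k = int r' + int m * int i'"
    have r: "r = (r' + 1) mod m"
      using conjunct1[OF crossed] layer_coords_eq_iff[OF \<open>r < m\<close> succ_less(2)] by blast
    have r': "r' = (r + 1) mod m"
      using conjunct2[OF crossed] layer_coords_eq_iff[OF succ_less(1) \<open>r' < m\<close>] by simp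
    from r have "r = ((r + 1) mod m + 1) mod m"
      unfolding r' .
    then have "r = (r + 2) mod m"
      by (simp add: mod_Suc_eq)
    with \<open>r < m\<close> assms have False
      by (cases "r + 2 < m") (auto simp: mod_if split: if_split_asm)
    then show ?thesis ..
  qed
qed

lemma layer_edgeE:
  assumes "2 \<le> m" "x \<in> edge_index m N"
  obtains u v where "layer_edge m x = {u, v}" "u \<in> {0..<int N * int m}" "v \<in> {0..<int N * int m}"
    "(u - v) mod int m = 1" "u \<noteq> v"
proof -
  obtain r i k where x: "x = (r, i, k)" "r < m" "i < N" "k < N"
    using assms(2) unfolding edge_index_def by auto
  define u where "u = int ((r + 1) mod m) + int m * int k"
  define v where "v = int r + int m * int i"
  have "(r + 1) mod m < m"
    using assms(1) by simp
  then have "u \<in> {0..<int N * int m}" "v \<in> {0..<int N * int m}"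
    unfolding u_def v_def using x layer_vertex_less by simp_all
  moreover have "(u - v) mod int m = 1"
  proof -
    have "u - v = ((int r + 1) mod int m - int r) + (int k - int i) * int m"
      unfolding u_def v_def by (simp add: of_nat_mod algebra_simps)
    then have "(u - v) mod int m = ((int r + 1) mod int m - int r) mod int m"
      by simp
    also have "\<dots> = 1"
      using assms(1) by (simp add: mod_diff_left_eq)
    finally show ?thesis .
  qed
  moreover have "u \<noteq> v"
    using \<open>(u - v) mod int m = 1\<close> by auto
  moreover have "layer_edge m x = {u, v}"
    unfolding x u_def v_def layer_edge_def by auto
  ultimately show ?thesis
    using that by blast
qed

lemma layer_edgeI:
  assumes "u \<in> {0..<int N * int m}" "v \<in> {0..<int N * int m}" "(u - v) mod int m = 1"
  shows "{u, v} \<in> layer_edge m ` edge_index m N"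
proof -
  obtain R I where u: "R < m" "I < N" "u = int R + int m * int I"
    using assms(1) by (rule layer_vertexE)
  obtain r i where v: "r < m" "i < N" "v = int r + int m * int i"
    using assms(2) by (rule layer_vertexE)
  have "u mod int m = (1 + v) mod int m"
    using assms(3) by (metis add.commute diff_add_cancel mod_add_left_eq)
  moreover have "u mod int m = int R"
    using u by simp
  moreover have "1 + v = (int r + 1) + int i * int m"
    using v by simp
  ultimately have "int R = int ((r + 1) mod m)"
    by (simp add: of_nat_mod add.commute)
  then have "layer_edge m (r, i, I) = {u, v}"
    unfolding layer_edge_def using u v by auto
  moreover have "(r, i, I) \<in> edge_index m N"
    using u v unfolding edge_index_def by simp
  ultimately show ?thesis
    by (metis image_eqI)
qed

lemma circ_edges_conn_set:
  assumes "2 \<le> m" "0 < K"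
  shows "circ_edges (2 * K * m) (conn_set m K) = layer_edge m ` edge_index m (2 * K)"
proof
  show "circ_edges (2 * K * m) (conn_set m K) \<subseteq> layer_edge m ` edge_index m (2 * K)"
  proof
    fix e
    assume "e \<in> circ_edges (2 * K * m) (conn_set m K)"
    then obtain u v where e: "e = {u, v}"
      and uv: "u \<in> {0..<int (2 * K) * int m}" "v \<in> {0..<int (2 * K) * int m}"
      and "(u - v) mod int m = 1 \<or> (v - u) mod int m = 1"
      unfolding circ_edges_circ_step circ_vertices_def circ_step_conn_set_iff[OF assms] by auto
    then show "e \<in> layer_edge m ` edge_index m (2 * K)"
      using layer_edgeI[OF uv] layer_edgeI[OF uv(2,1)] by (auto simp: insert_commute)
  qed
next
  show "layer_edge m ` edge_index m (2 * K) \<subseteq> circ_edges (2 * K * m) (conn_set m K)"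
  proof
    fix e
    assume "e \<in> layer_edge m ` edge_index m (2 * K)"
    then obtain x where "x \<in> edge_index m (2 * K)" "e = layer_edge m x"
      by blast
    then obtain u v where "e = {u, v}" "u \<in> {0..<int (2 * K) * int m}"
      "v \<in> {0..<int (2 * K) * int m}" "(u - v) mod int m = 1" "u \<noteq> v"
      using layer_edgeE assms(1) by metis
    then show "e \<in> circ_edges (2 * K * m) (conn_set m K)"
      unfolding circ_edges_circ_step circ_vertices_def circ_step_conn_set_iff[OF assms] by auto
  qed
qed

lemma layer_vertex_in_layer_edge_iff:
  assumes "r < m" "r' < m"
  shows "int r + int m * int i \<in> layer_edge m (r', i', k') \<longleftrightarrow>
    (r' = r \<and> i' = i) \<or> (r' = (r + m - 1) mod m \<and> k' = i)"
proof -
  have "(r' + 1) mod m < m"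
    using assms by simp
  then have "int r + int m * int i \<in> layer_edge m (r', i', k') \<longleftrightarrow>
      (r = r' \<and> i = i') \<or> (r = (r' + 1) mod m \<and> i = k')"
    unfolding layer_edge_def using layer_coords_eq_iff[OF assms] layer_coords_eq_iff[OF assms(1)]
    by simp
  then show ?thesis
    using succ_mod_eq_iff[OF assms] by blast
qed

lemma incident_layer_edges:
  assumes "r < m" "i < N"
  shows "{e \<in> layer_edge m ` edge_index m N. int r + int m * int i \<in> e} =
    layer_edge m ` ((\<lambda>k. (r, i, k)) ` {..<N} \<union> (\<lambda>k. ((r + m - 1) mod m, k, i)) ` {..<N})"
proof -
  have "(r + m - 1) mod m < m"
    using assms by simp
  then have "{x \<in> edge_index m N. int r + int m * int i \<in> layer_edge m x} =
      (\<lambda>k. (r, i, k)) ` {..<N} \<union> (\<lambda>k. ((r + m - 1) mod m, k, i)) ` {..<N}"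
    using assms unfolding edge_index_def by (auto simp: layer_vertex_in_layer_edge_iff)
  then show ?thesis
    by blast
qed

lemma vsum_layer_edges:
  assumes "3 \<le> m" "r < m" "i < N"
  shows "vsum (layer_edge m ` edge_index m N) g (int r + int m * int i) =
    (\<Sum>k<N. g (layer_edge m (r, i, k)) + g (layer_edge m ((r + m - 1) mod m, k, i)))"
proof -
  let ?r' = "(r + m - 1) mod m"
  let ?A = "(\<lambda>k. (r, i, k)) ` {..<N}" and ?B = "(\<lambda>k. (?r', k, i)) ` {..<N}"
  have "?r' < m" "?r' \<noteq> r"
    using assms(1,2) by (cases r; simp)+
  then have "?A \<union> ?B \<subseteq> edge_index m N" "?A \<inter> ?B = {}"
    using assms unfolding edge_index_def by auto
  have "inj_on (layer_edge m) (?A \<union> ?B)"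
    using inj_on_layer_edge[OF assms(1)] \<open>?A \<union> ?B \<subseteq> edge_index m N\<close> by (rule inj_on_subset)
  then have "vsum (layer_edge m ` edge_index m N) g (int r + int m * int i) =
      sum (g \<circ> layer_edge m) (?A \<union> ?B)"
    unfolding vsum_def incident_layer_edges[OF assms(2,3)] by (rule sum.reindex)
  also have "\<dots> = sum (g \<circ> layer_edge m) ?A + sum (g \<circ> layer_edge m) ?B"
    using \<open>?A \<inter> ?B = {}\<close> by (intro sum.union_disjoint) auto
  also have "\<dots> = (\<Sum>k<N. g (layer_edge m (r, i, k)) + g (layer_edge m (?r', k, i)))"
    by (simp add: sum.reindex inj_on_def sum.distrib)
  finally show ?thesis .
qed

lemma layer_edges_regular:
  assumes "3 \<le> m" "x \<in> {0..<int N * int m}"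
  shows "card {e \<in> layer_edge m ` edge_index m N. x \<in> e} = 2 * N"
proof -
  obtain r i where "r < m" "i < N" "x = int r + int m * int i"
    using assms(2) by (rule layer_vertexE)
  then show ?thesis
    using vsum_layer_edges[OF assms(1), of r i N "\<lambda>_. 1"] by (simp add: vsum_def)
qed

section \<open>A labeling with three vertex sums\<close>

lemma two_digit_less_square:
  fixes a c q :: nat
  assumes "a < q" "c < q"
  shows "a + q * c < q\<^sup>2"
proof -
  have "a + q * c < q * (c + 1)"
    using assms(1) by simp
  also have "\<dots> \<le> q * q"
    using assms(2) by (intro mult_le_mono2) simp
  finally show ?thesis
    by (simp add: power2_eq_square)
qed

lemma even_pred_mod_iff:
  fixes m r :: nat
  assumes "even m" "r < m"
  shows "even ((r + m - 1) mod m) \<longleftrightarrow> odd r"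
proof (cases r)
  case 0
  then show ?thesis
    using assms by (simp add: odd_pos)
next
  case (Suc r0)
  then show ?thesis
    using assms by simp
qed

definition layer_rank :: "nat \<Rightarrow> nat \<Rightarrow> nat" where
  "layer_rank m r = (if even r then r div 2 else m - 1 - r div 2)"

definition block_offset :: "nat \<Rightarrow> nat \<times> nat \<times> nat \<Rightarrow> nat" where
  "block_offset N = (\<lambda>(r, i, k). if even r then k + N * i else N\<^sup>2 - 1 - (i + N * k))"

definition edge_label :: "nat \<Rightarrow> nat \<Rightarrow> nat \<times> nat \<times> nat \<Rightarrow> nat" where
  "edge_label m N x = block_offset N x + N\<^sup>2 * layer_rank m (fst x) + 1"

lemma layer_rank_less:
  assumes "even m" "r < m"
  shows "layer_rank m r < m"
  using assms unfolding layer_rank_def by auto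

lemma inj_on_layer_rank:
  assumes "even m"
  shows "inj_on (layer_rank m) {..<m}"
proof (rule inj_onI)
  fix r r'
  assume "r \<in> {..<m}" "r' \<in> {..<m}" "layer_rank m r = layer_rank m r'"
  moreover have "r div 2 < m div 2" "m div 2 \<le> m - 1 - r div 2" if "r < m" for r
    using that assms by (auto elim!: evenE)
  ultimately show "r = r'"
    unfolding layer_rank_def by (auto split: if_splits elim!: evenE oddE)
qed

lemma layer_rank_pred_sum:
  assumes "even m" "2 \<le> m" "r < m"
  shows "layer_rank m r + layer_rank m ((r + m - 1) mod m) =
    (if r = 0 then m div 2 else if odd r then m - 1 else m)"
proof (cases r)
  case 0
  then show ?thesis
    using assms unfolding layer_rank_def by (auto elim!: evenE)
next
  case (Suc r0)
  then have "(r + m - 1) mod m = r0"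
    using assms by simp
  then show ?thesis
    using Suc assms unfolding layer_rank_def by (auto elim!: evenE oddE)
qed

lemma block_offset_less:
  assumes "(r, i, k) \<in> edge_index m N"
  shows "block_offset N (r, i, k) < N\<^sup>2"
  using assms two_digit_less_square[of k N i] two_digit_less_square[of i N k]
  unfolding edge_index_def block_offset_def by auto

lemma block_offset_inj:
  assumes "(r, i, k) \<in> edge_index m N" "(r, i', k') \<in> edge_index m N"
    and "block_offset N (r, i, k) = block_offset N (r, i', k')"
  shows "i = i' \<and> k = k'"
proof -
  have "i < N" "k < N" "i' < N" "k' < N"
    using assms(1,2) unfolding edge_index_def by auto
  moreover have "k + N * i = k' + N * i' \<or> i + N * k = i' + N * k'"
    using assms(3) two_digit_less_square[OF \<open>i < N\<close> \<open>k < N\<close>]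
      two_digit_less_square[OF \<open>i' < N\<close> \<open>k' < N\<close>]
    unfolding block_offset_def by (auto split: if_splits)
  ultimately show ?thesis
    by (auto simp: two_digit_eq_iff)
qed

lemma bij_betw_edge_label:
  assumes "even m"
  shows "bij_betw (edge_label m N) (edge_index m N) {1..m * N\<^sup>2}"
proof -
  have "inj_on (edge_label m N) (edge_index m N)"
  proof (rule inj_onI)
    fix x y
    assume x: "x \<in> edge_index m N" and y: "y \<in> edge_index m N"
      and "edge_label m N x = edge_label m N y"
    moreover obtain r i k r' i' k' where xy: "x = (r, i, k)" "y = (r', i', k')"
      by (cases x, cases y)
    ultimately have "block_offset N x = block_offset N y" "layer_rank m r = layer_rank m r'"
      using block_offset_less unfolding edge_label_def by (auto simp: two_digit_eq_iff)
    moreover have "r < m" "r' < m"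
      using x y unfolding xy edge_index_def by auto
    ultimately have "r = r'"
      using inj_on_layer_rank[OF assms] by (auto dest: inj_onD)
    then show "x = y"
      using block_offset_inj x y \<open>block_offset N x = block_offset N y\<close> unfolding xy by blast
  qed
  moreover have "edge_label m N x \<in> {1..m * N\<^sup>2}" if "x \<in> edge_index m N" for x
  proof -
    have "layer_rank m (fst x) + 1 \<le> m"
      using that layer_rank_less[OF assms] unfolding edge_index_def by (auto simp: Suc_le_eq)
    then have "N\<^sup>2 * (layer_rank m (fst x) + 1) \<le> N\<^sup>2 * m"
      by (rule mult_le_mono2)
    moreover have "block_offset N x < N\<^sup>2"
      using that block_offset_less by (cases x) blast
    ultimately show ?thesis
      unfolding edge_label_def by (simp add: algebra_simps)
  qed
  moreover have "card (edge_index m N) = m * N\<^sup>2" "finite (edge_index m N)"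
    unfolding edge_index_def by (simp_all add: card_cartesian_product power2_eq_square)
  ultimately show ?thesis
    unfolding bij_betw_def
    by (metis card_image card_atLeastAtMost diff_Suc_1 finite_atLeastAtMost card_subset_eq
        image_subsetI)
qed

lemma edge_label_pair:
  assumes "even m" "2 \<le> m" "r < m" "i < N" "k < N"
  shows "edge_label m N (r, i, k) + edge_label m N ((r + m - 1) mod m, k, i) =
    N\<^sup>2 * (layer_rank m r + layer_rank m ((r + m - 1) mod m)) + N\<^sup>2 + 1"
proof -
  have "k + N * i < N\<^sup>2" "i + N * k < N\<^sup>2" "0 < N\<^sup>2"
    using assms(4,5) by (simp_all add: two_digit_less_square)
  moreover have "even ((r + m - 1) mod m) \<longleftrightarrow> odd r"
    using assms(1,3) by (rule even_pred_mod_iff)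
  ultimately show ?thesis
    unfolding edge_label_def block_offset_def by (simp add: algebra_simps)
qed

definition layer_labeling :: "nat \<Rightarrow> nat \<Rightarrow> int set \<Rightarrow> nat" where
  "layer_labeling m N = edge_label m N \<circ> the_inv_into (edge_index m N) (layer_edge m)"

lemma layer_labeling_layer_edge:
  assumes "3 \<le> m" "x \<in> edge_index m N"
  shows "layer_labeling m N (layer_edge m x) = edge_label m N x"
  using assms inj_on_layer_edge unfolding layer_labeling_def by (simp add: the_inv_into_f_f)

lemma bij_betw_layer_labeling:
  assumes "even m" "3 \<le> m"
  shows "bij_betw (layer_labeling m N) (layer_edge m ` edge_index m N) {1..m * N\<^sup>2}"
  unfolding layer_labeling_def
  using bij_betw_the_inv_into[OF inj_on_imp_bij_betw[OF inj_on_layer_edge[OF assms(2)]]]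
    bij_betw_edge_label[OF assms(1)] by (rule bij_betw_trans)

definition vertex_weight :: "nat \<Rightarrow> int \<Rightarrow> nat" where
  "vertex_weight m x = (if odd x then m - 1 else if x mod int m = 0 then m div 2 else m)"

lemma vertex_weight_neq:
  assumes "even m" "4 \<le> m" "odd x \<noteq> odd y"
  shows "vertex_weight m x \<noteq> vertex_weight m y"
proof -
  have "m div 2 \<noteq> m - 1" "m \<noteq> m - 1"
    using assms(1,2) by (auto elim!: evenE)
  then show ?thesis
    using assms(3) unfolding vertex_weight_def by auto
qed

lemma vsum_layer_labeling:
  assumes "even m" "4 \<le> m" "x \<in> {0..<int N * int m}"
  shows "vsum (layer_edge m ` edge_index m N) (layer_labeling m N) x =
    N * (N\<^sup>2 * vertex_weight m x + N\<^sup>2 + 1)"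
proof -
  obtain r i where ri: "r < m" "i < N" "x = int r + int m * int i"
    using assms(3) by (rule layer_vertexE)
  have "(r, i, k) \<in> edge_index m N" "((r + m - 1) mod m, k, i) \<in> edge_index m N" if "k < N" for k
    using ri that assms(2) unfolding edge_index_def by simp_all
  then have "vsum (layer_edge m ` edge_index m N) (layer_labeling m N) x =
      (\<Sum>k<N. edge_label m N (r, i, k) + edge_label m N ((r + m - 1) mod m, k, i))"
    using ri assms(2) by (simp add: vsum_layer_edges layer_labeling_layer_edge)
  also have "\<dots> = (\<Sum>k<N. N\<^sup>2 * (layer_rank m r + layer_rank m ((r + m - 1) mod m)) + N\<^sup>2 + 1)"
    using ri assms(1,2) by (intro sum.cong refl edge_label_pair) auto
  also have "\<dots> = N * (N\<^sup>2 * (layer_rank m r + layer_rank m ((r + m - 1) mod m)) + N\<^sup>2 + 1)"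
    by simp
  also have "layer_rank m r + layer_rank m ((r + m - 1) mod m) =
      (if r = 0 then m div 2 else if odd r then m - 1 else m)"
    by (rule layer_rank_pred_sum) (use ri assms in auto)
  also have "\<dots> = vertex_weight m x"
  proof -
    have "odd x \<longleftrightarrow> odd r" "x mod int m = int r"
      using ri assms(1) by auto
    then show ?thesis
      unfolding vertex_weight_def by simp
  qed
  finally show ?thesis .
qed

lemma layer_labeling_local_antimagic:
  assumes "even m" "4 \<le> m" "0 < N"
  defines "V \<equiv> {0..<int N * int m}" and "E \<equiv> layer_edge m ` edge_index m N"
  shows "local_antimagic V E (layer_labeling m N)"
    and "card (vsum E (layer_labeling m N) ` V) = 3"
proof -
  define F where "F w = N * (N\<^sup>2 * w + N\<^sup>2 + 1)" for w
  have "strict_mono F"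
    unfolding F_def using assms(3) by (intro strict_monoI) simp
  then have F_eq_iff: "F w = F w' \<longleftrightarrow> w = w'" for w w'
    by (simp add: strict_mono_eq)
  have vsum_F: "vsum E (layer_labeling m N) x = F (vertex_weight m x)" if "x \<in> V" for x
    using vsum_layer_labeling[OF assms(1,2)] that unfolding V_def E_def F_def by blast
  have "bij_betw (layer_labeling m N) E {1..m * N\<^sup>2}"
    unfolding E_def using assms(1,2) by (intro bij_betw_layer_labeling) simp_all
  moreover have "card E = m * N\<^sup>2"
    using bij_betw_same_card[OF calculation] by simp
  moreover have "vsum E (layer_labeling m N) x \<noteq> vsum E (layer_labeling m N) y"
    if "x \<in> V" "y \<in> V" "{x, y} \<in> E" for x y
  proof -
    obtain e where "e \<in> edge_index m N" "{x, y} = layer_edge m e"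
      using \<open>{x, y} \<in> E\<close> unfolding E_def by blast
    moreover have "2 \<le> m"
      using assms(2) by simp
    ultimately obtain u v where uv: "{x, y} = {u, v}" and diff: "(u - v) mod int m = 1"
      using layer_edgeE by metis
    have "(u - v) mod 2 = (u - v) mod int m mod 2"
      using assms(1) by (simp add: mod_mod_cancel)
    then have "(u - v) mod 2 = 1"
      using diff by simp
    then have "odd (u - v)"
      by (simp only: odd_iff_mod_2_eq_one)
    then have "odd x \<noteq> odd y"
      using uv by (auto simp: doubleton_eq_iff)
    then show ?thesis
      using vsum_F[OF \<open>x \<in> V\<close>] vsum_F[OF \<open>y \<in> V\<close>] F_eq_iff vertex_weight_neq[OF assms(1,2)]
      by simp
  qed
  ultimately show "local_antimagic V E (layer_labeling m N)"
    unfolding local_antimagic_def by simp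
  have "vsum E (layer_labeling m N) ` V = F ` vertex_weight m ` V"
    using vsum_F by (simp add: image_image)
  also have "vertex_weight m ` V = {m div 2, m - 1, m}"
  proof
    show "vertex_weight m ` V \<subseteq> {m div 2, m - 1, m}"
      unfolding vertex_weight_def by auto
    have "4 \<le> N * m"
      using assms(2,3) mult_le_mono[of 1 N 4 m] by simp
    then have "4 \<le> int N * int m"
      by (metis of_nat_mult of_nat_numeral of_nat_le_iff)
    then have "0 \<in> V" "1 \<in> V" "2 \<in> V"
      unfolding V_def by auto
    moreover have "vertex_weight m 0 = m div 2" "vertex_weight m 1 = m - 1" "vertex_weight m 2 = m"
      using assms(2) unfolding vertex_weight_def by auto
    ultimately show "{m div 2, m - 1, m} \<subseteq> vertex_weight m ` V"
      by (metis empty_subsetI image_eqI insert_subset)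
  qed
  also have "card (F ` {m div 2, m - 1, m}) = 3"
  proof -
    have "m div 2 < m - 1" "m - 1 < m"
      using assms(1,2) by (auto elim!: evenE)
    then show ?thesis
      using F_eq_iff by (subst card_image) (auto intro: inj_onI)
  qed
  finally show "card (vsum E (layer_labeling m N) ` V) = 3" .
qed

lemma chi_la_layer_graph:
  assumes "even m" "4 \<le> m" "0 < N"
  shows "chi_la {0..<int N * int m} (layer_edge m ` edge_index m N) = 3"
proof (rule chi_la_eqI)
  let ?V = "{0..<int N * int m}" and ?E = "layer_edge m ` edge_index m N"
  show "local_antimagic ?V ?E (layer_labeling m N)" "card (vsum ?E (layer_labeling m N) ` ?V) = 3"
    using layer_labeling_local_antimagic[OF assms] by blast+
  fix f
  assume f: "local_antimagic ?V ?E f"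
  have "(0, 0, 0) \<in> edge_index m N"
    using assms unfolding edge_index_def by simp
  then have "finite ?E" "?E \<noteq> {}"
    unfolding edge_index_def by auto
  moreover have "\<exists>u v. e = {u, v} \<and> u \<in> ?V \<and> v \<in> ?V \<and> u \<noteq> v" if edge: "e \<in> ?E" for e
  proof -
    obtain x where "x \<in> edge_index m N" "e = layer_edge m x"
      using edge by blast
    moreover have "2 \<le> m"
      using assms(2) by simp
    ultimately show ?thesis
      using layer_edgeE by metis
  qed
  moreover have "card {e \<in> ?E. x \<in> e} = 2 * N" if "x \<in> ?V" for x
    using assms(2) that by (intro layer_edges_regular) simp_all
  ultimately show "3 \<le> card (vsum ?E f ` ?V)"
    using f by (intro regular_local_antimagic_card_ge_3) auto
qed

theorem chi_la_circulant_conn_set: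
  assumes "even m" "4 \<le> m" "0 < K"
  shows "chi_la (circ_vertices (2 * K * m)) (circ_edges (2 * K * m) (conn_set m K)) = 3"
proof -
  have "circ_vertices (2 * K * m) = {0..<int (2 * K) * int m}"
    unfolding circ_vertices_def by simp
  moreover have "circ_edges (2 * K * m) (conn_set m K) = layer_edge m ` edge_index m (2 * K)"
    using assms by (intro circ_edges_conn_set) simp_all
  ultimately show ?thesis
    using chi_la_layer_graph[OF assms(1,2), of "2 * K"] assms(3) by simp
qed

theorem mainTheorem12:
  fixes s t :: nat
  assumes "s \<ge> 2"
  defines "n \<equiv> 2 ^ s * (t + 2)"
    and "S \<equiv> {1 + int j * (2 * int t + 4) | j. j \<le> 2 ^ (s - 2) - 1}
            \<union> {2 * int t + 3 + int j * (2 * int t + 4) | j. j \<le> 2 ^ (s - 2) - 1}"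
  shows "chi_la (circ_vertices n) (circ_edges n S) = 3"
proof -
  define K :: nat where "K = 2 ^ (s - 2)"
  define m :: nat where "m = 2 * t + 4"
  have "0 < K"
    unfolding K_def by simp
  obtain s' where "s = s' + 2"
    using assms(1) by (metis le_add_diff_inverse2)
  then have "n = 2 * K * m"
    unfolding n_def K_def m_def by (simp add: power_add algebra_simps)
  moreover have "j \<le> K - 1 \<longleftrightarrow> j < K" for j
    using \<open>0 < K\<close> by linarith
  then have "S = conn_set m K"
    unfolding S_def conn_set_def K_def[symmetric] m_def by (simp add: algebra_simps)
  ultimately show ?thesis
    using chi_la_circulant_conn_set[of m K] \<open>0 < K\<close> unfolding m_def by simp
qed

end
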